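(* Consider the two-state hidden Markov model in which $X_i=\mu_i+\epsilon_i$, $i=1,\dots,n$, with $\epsilon_i\stackrel{iid}{\sim}N(0,\sigma^2)$ ($\sigma^2$ known) independent of everything else; the hidden states $\theta_1,\dots,\theta_n\in\{0,1\}$ form a homogeneous Markov chain with initial distribution $(\psi_0,\psi_1)$ and transition matrix $\mathcal{A}=(a_{jk})$, $a_{jk}=P(\theta_i=k\mid\theta_{i-1}=j)$, $0<a_{jk}<1$; and, given $\pmb\theta$, the $\mu_i$ are conditionally independent with $\mu_i\mid\theta_i=k\sim g_k$, $k=0,1$. Let $f_k(x)=\int\phi_\sigma(x-\mu)g_k(\mu)\,d\mu$, where $\phi_\sigma$ is the $N(0,\sigma^2)$ density, and suppose the HMM parameters $\Lambda=(\mathcal{A},(\psi_0,\psi_1),f_0,f_1)$ are known. Then the estimator of $\pmb\mu=(\mu_1,\dots,\mu_n)$ based on $\pmb X=\pmb x$ that minimizes the mean squared error $n^{-1}\sum_{i=1}^n\mathbb{E}(\mu_i-\hat\mu_i)^2$ is $$\hat\mu_i^{\sf Bayes}(\pmb x;\Lambda)=\sum_{k=0}^1\mathbb{E}(\mu_i\mid\theta_i=k,x_i)\,\mathbb{P}(\theta_i=k\mid\pmb x)=\sum_{k=0}^1\Big\{x_i+\sigma^2\frac{f_k'(x_i)}{f_k(x_i)}\Big\}\mathbb{P}(\theta_i=k\mid\pmb x),\quad i=1,\dots,n.$$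
   Context: $f_k'$ denotes the derivative of $f_k$. Expectations are over the joint distribution of $(\pmb\theta,\pmb\mu,\pmb X)$ under the model. *)

theory Defs
  imports "HOL-Probability.Probability"
begin

(* Indices are 0-based: i ranges over {..<n}; states are 0 and 1. *)

definition phi :: "real \<Rightarrow> real \<Rightarrow> real" where
  "phi \<sigma> t = normal_density 0 \<sigma> t"

definition mixf :: "(nat \<Rightarrow> real \<Rightarrow> real) \<Rightarrow> real \<Rightarrow> nat \<Rightarrow> real \<Rightarrow> real" where
  "mixf g \<sigma> k x = (LINT m|lborel. phi \<sigma> (x - m) * g k m)"

definition states :: "nat \<Rightarrow> (nat \<Rightarrow> nat) set" where
  "states n = PiE {..<n} (\<lambda>_. {0, 1})"

definition chain_prob :: "(nat \<Rightarrow> real) \<Rightarrow> (nat \<Rightarrow> nat \<Rightarrow> real) \<Rightarrow> nat \<Rightarrow> (nat \<Rightarrow> nat) \<Rightarrow> real" where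
  "chain_prob \<psi> a n \<theta> = \<psi> (\<theta> 0) * (\<Prod>i\<in>{1..<n}. a (\<theta> (i - 1)) (\<theta> i))"

definition post :: "(nat \<Rightarrow> real) \<Rightarrow> (nat \<Rightarrow> nat \<Rightarrow> real) \<Rightarrow> (nat \<Rightarrow> real \<Rightarrow> real) \<Rightarrow> real
    \<Rightarrow> nat \<Rightarrow> nat \<Rightarrow> nat \<Rightarrow> (nat \<Rightarrow> real) \<Rightarrow> real" where
  "post \<psi> a g \<sigma> n i k x =
     (\<Sum>\<theta>\<in>{\<theta>\<in>states n. \<theta> i = k}. chain_prob \<psi> a n \<theta> * (\<Prod>j<n. mixf g \<sigma> (\<theta> j) (x j)))
     / (\<Sum>\<theta>\<in>states n. chain_prob \<psi> a n \<theta> * (\<Prod>j<n. mixf g \<sigma> (\<theta> j) (x j)))"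

definition cond_mean :: "(nat \<Rightarrow> real \<Rightarrow> real) \<Rightarrow> real \<Rightarrow> nat \<Rightarrow> real \<Rightarrow> real" where
  "cond_mean g \<sigma> k y = (LINT m|lborel. m * phi \<sigma> (y - m) * g k m) / mixf g \<sigma> k y"

definition bayes_est :: "(nat \<Rightarrow> real) \<Rightarrow> (nat \<Rightarrow> nat \<Rightarrow> real) \<Rightarrow> (nat \<Rightarrow> real \<Rightarrow> real) \<Rightarrow> real
    \<Rightarrow> nat \<Rightarrow> (nat \<Rightarrow> real) \<Rightarrow> nat \<Rightarrow> real" where
  "bayes_est \<psi> a g \<sigma> n x i =
     (\<Sum>k\<in>{0,1}. (x i + \<sigma>\<^sup>2 * deriv (mixf g \<sigma> k) (x i) / mixf g \<sigma> k (x i)) * post \<psi> a g \<sigma> n i k x)"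

(* n^{-1} sum_i E (mu_i - delta_i(X))^2 under the joint law of (theta, mu, X):
   density P(theta) * prod_j g_{theta_j}(mu_j) phi_sigma(x_j - mu_j) *)
definition mse :: "(nat \<Rightarrow> real) \<Rightarrow> (nat \<Rightarrow> nat \<Rightarrow> real) \<Rightarrow> (nat \<Rightarrow> real \<Rightarrow> real) \<Rightarrow> real
    \<Rightarrow> nat \<Rightarrow> ((nat \<Rightarrow> real) \<Rightarrow> nat \<Rightarrow> real) \<Rightarrow> ennreal" where
  "mse \<psi> a g \<sigma> n \<delta> = ennreal (1 / real n) *
     (\<Sum>i<n. \<Sum>\<theta>\<in>states n.
        \<integral>\<^sup>+ x. \<integral>\<^sup>+ m.
          ennreal (chain_prob \<psi> a n \<theta> * (\<Prod>j<n. g (\<theta> j) (m j) * phi \<sigma> (x j - m j)))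
          * ennreal ((m i - \<delta> x i)\<^sup>2)
        \<partial>(PiM {..<n} (\<lambda>_. lborel)) \<partial>(PiM {..<n} (\<lambda>_. lborel)))"

end

theory Submission
  imports Defs
begin

text \<open>
  Integrating out \<mu>, the i-th term of the risk of an estimator d is the integral over x of
  \<Sum>\<theta> W\<theta>(x) \<integral> (m - d(x))^2 \<phi>\<sigma>(x_i - m) g_{\<theta>_i}(m) dm, where
  W\<theta>(x) = P(\<theta>) \<Prod>_{j \<noteq> i} f_{\<theta>_j}(x_j). For fixed x this is a quadratic in d(x), minimised
  by the posterior mean \<Sum>\<theta> W\<theta> M\<theta>1 / \<Sum>\<theta> W\<theta> M\<theta>0, where
  M\<theta>p = \<integral> m^p \<phi>\<sigma>(x_i - m) g_{\<theta>_i}(m) dm; grouping the \<theta> by the value of \<theta>_i turns it into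
  \<Sum>_k E(\<mu>_i | \<theta>_i = k, x_i) P(\<theta>_i = k | x). So the Bayes rule minimises the risk pointwise in x.
  Tweedie's formula \<sigma>^2 f_k'(y) = \<integral> (m - y) \<phi>\<sigma>(y - m) g_k(m) dm identifies E(\<mu>_i | \<theta>_i = k, x_i)
  with x_i + \<sigma>^2 f_k'(x_i) / f_k(x_i). Differentiation under the integral sign is justified by
  |\<phi>\<sigma>''| \<le> 3 \<phi>\<sigma>(0) / \<sigma>^2, which bounds the Taylor remainder of \<phi>\<sigma> uniformly.
\<close>

lemma phi_nonneg: "phi \<sigma> t \<ge> 0"
  by (simp add: phi_def)

lemma phi_pos: "\<sigma> > 0 \<Longrightarrow> phi \<sigma> t > 0"
  by (simp add: phi_def normal_density_pos)

lemma phi_eq: "phi \<sigma> t = phi \<sigma> 0 * exp (- t\<^sup>2 / (2 * \<sigma>\<^sup>2))"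
  by (simp add: phi_def normal_density_def)

lemma phi_le_phi_0: "phi \<sigma> t \<le> phi \<sigma> 0"
proof -
  have "exp (- t\<^sup>2 / (2 * \<sigma>\<^sup>2)) \<le> 1"
    by simp
  then show ?thesis
    using phi_eq[of \<sigma> t] phi_nonneg[of \<sigma> 0] by (simp add: mult_left_le)
qed

lemma sq_mult_phi_le:
  assumes "\<sigma> > 0"
  shows "t\<^sup>2 * phi \<sigma> t \<le> 2 * \<sigma>\<^sup>2 * phi \<sigma> 0"
proof -
  define u where "u = t\<^sup>2 / (2 * \<sigma>\<^sup>2)"
  have "u \<le> exp u"
    using exp_ge_add_one_self[of u] by linarith
  then have "u * exp (- u) \<le> 1"
    by (simp add: exp_minus field_simps)
  moreover have "t\<^sup>2 * phi \<sigma> t = 2 * \<sigma>\<^sup>2 * phi \<sigma> 0 * (u * exp (- u))"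
    using assms phi_eq[of \<sigma> t] by (simp add: u_def)
  ultimately show ?thesis
    using assms phi_nonneg[of \<sigma> 0] by (simp add: mult_left_le)
qed

lemma quadratic_mult_phi_le:
  assumes "\<sigma> > 0"
  shows "(1 + m\<^sup>2) * phi \<sigma> (y - m) \<le> (1 + 2 * y\<^sup>2 + 4 * \<sigma>\<^sup>2) * phi \<sigma> 0"
proof -
  have "m\<^sup>2 \<le> 2 * (y - m)\<^sup>2 + 2 * y\<^sup>2"
    using zero_le_power2[of "m - 2 * y"] by (simp add: power2_eq_square algebra_simps)
  then have "(1 + m\<^sup>2) * phi \<sigma> (y - m) \<le> (1 + 2 * y\<^sup>2 + 2 * (y - m)\<^sup>2) * phi \<sigma> (y - m)"
    using phi_nonneg[of \<sigma> "y - m"] by (intro mult_right_mono) auto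
  also have "\<dots> = (1 + 2 * y\<^sup>2) * phi \<sigma> (y - m) + 2 * ((y - m)\<^sup>2 * phi \<sigma> (y - m))"
    by (simp add: algebra_simps)
  also have "\<dots> \<le> (1 + 2 * y\<^sup>2) * phi \<sigma> 0 + 2 * (2 * \<sigma>\<^sup>2 * phi \<sigma> 0)"
    using phi_le_phi_0 sq_mult_phi_le[OF assms] by (intro add_mono mult_left_mono) auto
  finally show ?thesis
    by (simp add: algebra_simps)
qed

definition phi' :: "real \<Rightarrow> real \<Rightarrow> real" where
  "phi' \<sigma> t = - (t / \<sigma>\<^sup>2) * phi \<sigma> t"

definition phi'' :: "real \<Rightarrow> real \<Rightarrow> real" where
  "phi'' \<sigma> t = (t\<^sup>2 / \<sigma> ^ 4 - 1 / \<sigma>\<^sup>2) * phi \<sigma> t"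

lemma phi_fun_eq: "phi \<sigma> = (\<lambda>t. phi \<sigma> 0 * exp (- t\<^sup>2 / (2 * \<sigma>\<^sup>2)))"
  using phi_eq by blast

lemma has_real_derivative_phi:
  assumes "\<sigma> > 0"
  shows "(phi \<sigma> has_real_derivative phi' \<sigma> t) (at t)"
  unfolding phi'_def phi_eq[of \<sigma> t] using assms
  by (subst phi_fun_eq) (auto intro!: derivative_eq_intros simp: field_simps power2_eq_square)

lemma has_real_derivative_phi':
  assumes "\<sigma> > 0"
  shows "(phi' \<sigma> has_real_derivative phi'' \<sigma> t) (at t)"
proof -
  have "phi' \<sigma> = (\<lambda>t. - (t / \<sigma>\<^sup>2) * (phi \<sigma> 0 * exp (- t\<^sup>2 / (2 * \<sigma>\<^sup>2))))"
    unfolding phi'_def by (subst phi_fun_eq) (rule refl)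
  then show ?thesis
    unfolding phi''_def phi_eq[of \<sigma> t] using assms
    by (auto intro!: derivative_eq_intros simp: field_simps power2_eq_square power4_eq_xxxx)
qed

lemma abs_phi''_le:
  assumes "\<sigma> > 0"
  shows "\<bar>phi'' \<sigma> t\<bar> \<le> 3 * phi \<sigma> 0 / \<sigma>\<^sup>2"
proof -
  have "\<bar>phi'' \<sigma> t\<bar> = \<bar>t\<^sup>2 / \<sigma> ^ 4 - 1 / \<sigma>\<^sup>2\<bar> * phi \<sigma> t"
    unfolding phi''_def using phi_nonneg[of \<sigma> t] by (simp add: abs_mult)
  also have "\<dots> \<le> (t\<^sup>2 / \<sigma> ^ 4 + 1 / \<sigma>\<^sup>2) * phi \<sigma> t"
    using phi_nonneg[of \<sigma> t] by (intro mult_right_mono) (auto simp: abs_le_iff)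
  also have "\<dots> = (t\<^sup>2 * phi \<sigma> t) / \<sigma> ^ 4 + phi \<sigma> t / \<sigma>\<^sup>2"
    by (simp add: algebra_simps)
  also have "\<dots> \<le> (2 * \<sigma>\<^sup>2 * phi \<sigma> 0) / \<sigma> ^ 4 + phi \<sigma> 0 / \<sigma>\<^sup>2"
    using sq_mult_phi_le[OF assms, of t] phi_le_phi_0[of \<sigma> t]
    by (intro add_mono divide_right_mono) auto
  also have "\<dots> = 3 * phi \<sigma> 0 / \<sigma>\<^sup>2"
    using assms by (simp add: field_simps power2_eq_square power4_eq_xxxx)
  finally show ?thesis .
qed

lemma phi_taylor_remainder_le:
  assumes "\<sigma> > 0"
  shows "\<bar>phi \<sigma> (t + h) - phi \<sigma> t - h * phi' \<sigma> t\<bar> \<le> 3 * phi \<sigma> 0 / \<sigma>\<^sup>2 * h\<^sup>2"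
proof -
  \<comment> \<open>\<open>D m\<close> is the \<open>m\<close>-th derivative of \<open>\<lambda>u. phi \<sigma> (u + t)\<close>\<close>
  define D where "D = (\<lambda>m u. ([phi \<sigma>, phi' \<sigma>, phi'' \<sigma>] ! m) (u + t))"
  have "DERIV (D m) u :> D (Suc m) u" if "m < 2" for m u
    using that has_real_derivative_phi[OF assms] has_real_derivative_phi'[OF assms]
    by (auto simp: D_def less_2_cases_iff DERIV_shift[symmetric])
  then obtain \<xi> where "phi \<sigma> (h + t) = (\<Sum>m<2. D m 0 / fact m * h ^ m) + D 2 \<xi> / fact 2 * h\<^sup>2"
    using Maclaurin_bi_le[of D "D 0" 2 h] by (auto simp: D_def)
  then have "phi \<sigma> (t + h) - phi \<sigma> t - h * phi' \<sigma> t = phi'' \<sigma> (\<xi> + t) / 2 * h\<^sup>2"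
    by (simp add: D_def numeral_2_eq_2 add.commute)
  also have "\<bar>\<dots>\<bar> \<le> \<bar>phi'' \<sigma> (\<xi> + t)\<bar> * h\<^sup>2"
    by (simp add: abs_mult)
  also have "\<dots> \<le> 3 * phi \<sigma> 0 / \<sigma>\<^sup>2 * h\<^sup>2"
    using abs_phi''_le[OF assms] by (intro mult_right_mono) auto
  finally show ?thesis .
qed

lemma has_real_derivative_of_quadratic_remainder:
  fixes f :: "real \<Rightarrow> real"
  assumes "\<And>z. \<bar>f z - f y - (z - y) * D\<bar> \<le> K * (z - y)\<^sup>2"
  shows "(f has_real_derivative D) (at y)"
proof -
  have "\<forall>\<^sub>F z in at y. norm ((f z - f y) / (z - y) - D) \<le> K * \<bar>z - y\<bar>"
  proof (rule eventually_mono[OF eventually_neq_at_within[of y y UNIV]])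
    fix z assume "z \<noteq> y"
    then have "(f z - f y) / (z - y) - D = (f z - f y - (z - y) * D) / (z - y)"
      by (simp add: field_simps)
    then have "norm ((f z - f y) / (z - y) - D) = \<bar>f z - f y - (z - y) * D\<bar> / \<bar>z - y\<bar>"
      by (simp add: abs_divide)
    also have "\<dots> \<le> K * (\<bar>z - y\<bar> * \<bar>z - y\<bar>) / \<bar>z - y\<bar>"
      using assms[of z] by (intro divide_right_mono) (auto simp: power2_eq_square)
    also have "\<dots> = K * \<bar>z - y\<bar>"
      using \<open>z \<noteq> y\<close> by (simp add: field_simps del: abs_mult_self_eq)
    finally show "norm ((f z - f y) / (z - y) - D) \<le> K * \<bar>z - y\<bar>" .
  qed
  moreover have "((\<lambda>z. K * \<bar>z - y\<bar>) \<longlongrightarrow> 0) (at y)"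
    by (intro tendsto_eq_intros) auto
  ultimately have "((\<lambda>z. (f z - f y) / (z - y) - D) \<longlongrightarrow> 0) (at y)"
    by (rule Lim_null_comparison)
  then show ?thesis
    by (subst has_field_derivative_iff) (rule LIM_zero_cancel)
qed

lemma abs_le_1_plus_sq: "\<bar>m :: real\<bar> \<le> 1 + m\<^sup>2"
  using zero_le_power2[of "\<bar>m\<bar> - 1"] by (simp add: power2_eq_square algebra_simps)

definition gauss_moment :: "(real \<Rightarrow> real) \<Rightarrow> real \<Rightarrow> nat \<Rightarrow> real \<Rightarrow> real" where
  "gauss_moment G \<sigma> p y = (\<integral>m. m ^ p * phi \<sigma> (y - m) * G m \<partial>lborel)"

lemma mixf_eq_gauss_moment: "mixf g \<sigma> k = gauss_moment (g k) \<sigma> 0"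
  by (simp add: fun_eq_iff mixf_def gauss_moment_def)

lemma cond_mean_eq_gauss_moment:
  "cond_mean g \<sigma> k y = gauss_moment (g k) \<sigma> 1 y / gauss_moment (g k) \<sigma> 0 y"
  by (simp add: cond_mean_def mixf_eq_gauss_moment gauss_moment_def)

definition sq_risk :: "(real \<Rightarrow> real) \<Rightarrow> real \<Rightarrow> real \<Rightarrow> real \<Rightarrow> real" where
  "sq_risk G \<sigma> y d = (\<integral>m. (m - d)\<^sup>2 * phi \<sigma> (y - m) * G m \<partial>lborel)"

locale gauss_mixture =
  fixes G :: "real \<Rightarrow> real" and \<sigma> :: real
  assumes measurable_G [measurable]: "G \<in> borel_measurable borel"
    and G_nonneg: "\<And>m. G m \<ge> 0"
    and nn_integral_G: "(\<integral>\<^sup>+ m. ennreal (G m) \<partial>lborel) = 1"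
    and sigma_pos: "\<sigma> > 0"
begin

lemma integrable_G: "integrable lborel G"
  by (rule integrableI_nn_integral_finite[where x=1]) (auto simp: G_nonneg nn_integral_G)

lemma integral_G: "(\<integral>m. G m \<partial>lborel) = 1"
  by (subst integral_eq_nn_integral) (auto simp: G_nonneg nn_integral_G)

lemma integrable_quadratic_growth:
  assumes [measurable]: "h \<in> borel_measurable borel" and h_le: "\<And>m. \<bar>h m\<bar> \<le> K * (1 + m\<^sup>2)"
  shows "integrable lborel (\<lambda>m. h m * phi \<sigma> (y - m) * G m)"
proof (rule Bochner_Integration.integrable_bound)
  let ?C = "K * ((1 + 2 * y\<^sup>2 + 4 * \<sigma>\<^sup>2) * phi \<sigma> 0)"
  show "integrable lborel (\<lambda>m. ?C * G m)"
    using integrable_G by simp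
  show "(\<lambda>m. h m * phi \<sigma> (y - m) * G m) \<in> borel_measurable lborel"
    unfolding phi_def by measurable
  have "K \<ge> 0"
    using h_le[of 0] by simp
  show "AE m in lborel. norm (h m * phi \<sigma> (y - m) * G m) \<le> norm (?C * G m)"
  proof (rule AE_I2)
    fix m
    have "norm (h m * phi \<sigma> (y - m) * G m) = \<bar>h m\<bar> * phi \<sigma> (y - m) * G m"
      using phi_nonneg[of \<sigma>] G_nonneg by (simp add: abs_mult)
    also have "\<dots> \<le> K * (1 + m\<^sup>2) * phi \<sigma> (y - m) * G m"
      using h_le[of m] phi_nonneg[of \<sigma>] G_nonneg[of m] by (intro mult_right_mono) auto
    also have "\<dots> = K * ((1 + m\<^sup>2) * phi \<sigma> (y - m)) * G m"
      by (simp add: mult.assoc)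
    also have "\<dots> \<le> ?C * G m"
      using quadratic_mult_phi_le[OF sigma_pos, of m y] \<open>K \<ge> 0\<close> G_nonneg[of m]
      by (intro mult_right_mono mult_left_mono) auto
    finally show "norm (h m * phi \<sigma> (y - m) * G m) \<le> norm (?C * G m)"
      by simp
  qed
qed

lemma has_bochner_integral_gauss_moment:
  assumes "p \<le> 2"
  shows "has_bochner_integral lborel (\<lambda>m. m ^ p * phi \<sigma> (y - m) * G m) (gauss_moment G \<sigma> p y)"
  unfolding gauss_moment_def
proof (intro has_bochner_integral_integrable integrable_quadratic_growth[where K=1])
  fix m :: real
  from assms consider "p = 0" | "p = 1" | "p = 2"
    by linarith
  then show "\<bar>m ^ p\<bar> \<le> 1 * (1 + m\<^sup>2)"
    by cases (auto simp: abs_le_1_plus_sq)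
qed simp

lemma measurable_gauss_moment [measurable]: "gauss_moment G \<sigma> p \<in> borel_measurable borel"
  unfolding gauss_moment_def[abs_def] phi_def
  by (rule lborel.borel_measurable_lebesgue_integral) measurable

lemma measurable_gauss_moment_component:
  assumes "j \<in> I"
  shows "(\<lambda>x. gauss_moment G \<sigma> p (x j)) \<in> borel_measurable (PiM I (\<lambda>_. lborel))"
  using assms by measurable

lemma gauss_moment_0_pos: "gauss_moment G \<sigma> 0 y > 0"
proof -
  have int: "integrable lborel (\<lambda>m. phi \<sigma> (y - m) * G m)"
    using integrable.intros[OF has_bochner_integral_gauss_moment[of 0 y]] by simp
  have "gauss_moment G \<sigma> 0 y \<noteq> 0"
  proof
    assume "gauss_moment G \<sigma> 0 y = 0"
    then have "AE m in lborel. phi \<sigma> (y - m) * G m = 0"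
      using integral_nonneg_eq_0_iff_AE[OF int] phi_nonneg G_nonneg
      by (simp add: gauss_moment_def)
    then have "AE m in lborel. ennreal (G m) = 0"
      by eventually_elim (metis phi_pos[OF sigma_pos] ennreal_0 less_irrefl mult_eq_0_iff)
    then have "(\<integral>\<^sup>+ m. ennreal (G m) \<partial>lborel) = 0"
      by (simp add: nn_integral_0_iff_AE)
    then show False
      using nn_integral_G by simp
  qed
  moreover have "gauss_moment G \<sigma> 0 y \<ge> 0"
    unfolding gauss_moment_def using phi_nonneg G_nonneg by (simp add: integral_nonneg_AE)
  ultimately show ?thesis
    by simp
qed

text \<open>Tweedie's formula comes from \<sigma>^2 phi' \<sigma> (y - m) = (m - y) phi \<sigma> (y - m) under the integral.\<close>

lemma has_bochner_integral_phi':
  "has_bochner_integral lborel (\<lambda>m. phi' \<sigma> (y - m) * G m)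
     ((gauss_moment G \<sigma> 1 y - y * gauss_moment G \<sigma> 0 y) / \<sigma>\<^sup>2)"
proof -
  have "(\<lambda>m. phi' \<sigma> (y - m) * G m)
      = (\<lambda>m. (m ^ 1 * phi \<sigma> (y - m) * G m - y * (m ^ 0 * phi \<sigma> (y - m) * G m)) / \<sigma>\<^sup>2)"
    by (simp add: phi'_def field_simps) (simp add: minus_divide_left)
  then show ?thesis
    by (simp only:) (intro has_bochner_integral_divide_zero has_bochner_integral_diff
        has_bochner_integral_mult_right has_bochner_integral_gauss_moment; simp)
qed

lemma gauss_moment_0_remainder_le:
  "\<bar>gauss_moment G \<sigma> 0 z - gauss_moment G \<sigma> 0 y
      - (z - y) * ((gauss_moment G \<sigma> 1 y - y * gauss_moment G \<sigma> 0 y) / \<sigma>\<^sup>2)\<bar>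
     \<le> 3 * phi \<sigma> 0 / \<sigma>\<^sup>2 * (z - y)\<^sup>2"
    (is "\<bar>?I\<bar> \<le> ?K")
proof -
  let ?r = "\<lambda>m. m ^ 0 * phi \<sigma> (z - m) * G m - m ^ 0 * phi \<sigma> (y - m) * G m
    - (z - y) * (phi' \<sigma> (y - m) * G m)"
  have r: "has_bochner_integral lborel ?r ?I"
    by (intro has_bochner_integral_diff has_bochner_integral_mult_right has_bochner_integral_gauss_moment
        has_bochner_integral_phi'; simp)
  then have "\<bar>?I\<bar> = \<bar>\<integral>m. ?r m \<partial>lborel\<bar>"
    by (simp only: has_bochner_integral_integral_eq)
  also have "\<bar>\<integral>m. ?r m \<partial>lborel\<bar> \<le> (\<integral>m. ?K * G m \<partial>lborel)"
  proof (rule integral_abs_bound_integral)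
    show "integrable lborel (\<lambda>m. ?K * G m)"
      using integrable_G by simp
    fix m
    have "?r m = (phi \<sigma> ((y - m) + (z - y)) - phi \<sigma> (y - m) - (z - y) * phi' \<sigma> (y - m)) * G m"
      by (simp add: algebra_simps)
    then have "\<bar>?r m\<bar> = \<bar>phi \<sigma> ((y - m) + (z - y)) - phi \<sigma> (y - m) - (z - y) * phi' \<sigma> (y - m)\<bar> * G m"
      using G_nonneg[of m] by (simp only: abs_mult abs_of_nonneg)
    also have "\<dots> \<le> ?K * G m"
      using phi_taylor_remainder_le[OF sigma_pos, of "y - m" "z - y"] G_nonneg[of m]
      by (intro mult_right_mono) auto
    finally show "\<bar>?r m\<bar> \<le> ?K * G m" .
  qed (rule integrable.intros[OF r])
  also have "\<dots> = ?K"
    using integral_G by simp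
  finally show ?thesis .
qed

lemma has_real_derivative_gauss_moment_0:
  "(gauss_moment G \<sigma> 0 has_real_derivative
     (gauss_moment G \<sigma> 1 y - y * gauss_moment G \<sigma> 0 y) / \<sigma>\<^sup>2) (at y)"
  by (rule has_real_derivative_of_quadratic_remainder[OF gauss_moment_0_remainder_le])

lemma tweedie_formula:
  "y + \<sigma>\<^sup>2 * deriv (gauss_moment G \<sigma> 0) y / gauss_moment G \<sigma> 0 y
     = gauss_moment G \<sigma> 1 y / gauss_moment G \<sigma> 0 y"
  using DERIV_imp_deriv[OF has_real_derivative_gauss_moment_0] gauss_moment_0_pos[of y] sigma_pos
  by (simp add: field_simps)

lemma has_bochner_integral_sq_loss:
  "has_bochner_integral lborel (\<lambda>m. (m - d)\<^sup>2 * phi \<sigma> (y - m) * G m)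
     (gauss_moment G \<sigma> 2 y - 2 * d * gauss_moment G \<sigma> 1 y + d\<^sup>2 * gauss_moment G \<sigma> 0 y)"
proof -
  have "(\<lambda>m. (m - d)\<^sup>2 * phi \<sigma> (y - m) * G m)
      = (\<lambda>m. m ^ 2 * phi \<sigma> (y - m) * G m - 2 * d * (m ^ 1 * phi \<sigma> (y - m) * G m)
        + d\<^sup>2 * (m ^ 0 * phi \<sigma> (y - m) * G m))"
    by (simp add: power2_eq_square algebra_simps)
  then show ?thesis
    by (simp only:) (intro has_bochner_integral_add has_bochner_integral_diff
        has_bochner_integral_mult_right has_bochner_integral_gauss_moment; simp)
qed

lemma sq_risk_eq:
  "sq_risk G \<sigma> y d = gauss_moment G \<sigma> 2 y - 2 * d * gauss_moment G \<sigma> 1 y + d\<^sup>2 * gauss_moment G \<sigma> 0 y"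
  unfolding sq_risk_def by (rule has_bochner_integral_integral_eq[OF has_bochner_integral_sq_loss])

lemma sq_risk_nonneg: "sq_risk G \<sigma> y d \<ge> 0"
  unfolding sq_risk_def using phi_nonneg G_nonneg by (intro integral_nonneg_AE AE_I2) simp

end

lemma weighted_quadratic_minimum:
  fixes W F S Q :: "'a \<Rightarrow> real"
  assumes "finite T" and W: "\<And>t. t \<in> T \<Longrightarrow> W t \<ge> 0" and F: "\<And>t. t \<in> T \<Longrightarrow> F t > 0"
  defines "B \<equiv> (\<Sum>t\<in>T. W t * S t) / (\<Sum>t\<in>T. W t * F t)"
  shows "(\<Sum>t\<in>T. W t * (Q t - 2 * B * S t + B\<^sup>2 * F t))
      \<le> (\<Sum>t\<in>T. W t * (Q t - 2 * d * S t + d\<^sup>2 * F t))"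
proof -
  define A where "A = (\<Sum>t\<in>T. W t * F t)"
  have sum_eq: "(\<Sum>t\<in>T. W t * (Q t - 2 * e * S t + e\<^sup>2 * F t))
      = (\<Sum>t\<in>T. W t * Q t) - 2 * e * (\<Sum>t\<in>T. W t * S t) + e\<^sup>2 * A" for e
    unfolding A_def sum_distrib_left sum_subtractf[symmetric] sum.distrib[symmetric]
    by (rule sum.cong) (simp_all add: algebra_simps)
  have "A \<ge> 0"
    unfolding A_def using W F by (intro sum_nonneg) (simp add: less_imp_le)
  show ?thesis
  proof (cases "A = 0")
    case True
    then have "\<forall>t\<in>T. W t * F t = 0"
      unfolding A_def using W F assms(1) by (subst sum_nonneg_eq_0_iff[symmetric]) (auto simp: less_imp_le)
    then have "\<forall>t\<in>T. W t = 0"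
      using F by (metis less_irrefl mult_eq_0_iff)
    then show ?thesis
      by simp
  next
    case False
    have "(\<Sum>t\<in>T. W t * S t) = B * A"
      using False unfolding B_def A_def by simp
    then have "(\<Sum>t\<in>T. W t * (Q t - 2 * d * S t + d\<^sup>2 * F t))
        - (\<Sum>t\<in>T. W t * (Q t - 2 * B * S t + B\<^sup>2 * F t)) = A * (d - B)\<^sup>2"
      unfolding sum_eq by (simp add: power2_eq_square algebra_simps)
    moreover have "A * (d - B)\<^sup>2 \<ge> 0"
      using \<open>A \<ge> 0\<close> by simp
    ultimately show ?thesis
      by linarith
  qed
qed

lemma nn_integral_prod_lborel:
  fixes H :: "nat \<Rightarrow> real \<Rightarrow> real"
  assumes H_int: "\<And>j. j < n \<Longrightarrow> integrable lborel (H j)"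
    and H_nonneg: "\<And>j t. j < n \<Longrightarrow> H j t \<ge> 0"
  shows "(\<integral>\<^sup>+ m. (\<Prod>j<n. ennreal (H j (m j))) \<partial>PiM {..<n} (\<lambda>_. lborel))
      = ennreal (\<Prod>j<n. \<integral>t. H j t \<partial>lborel)"
proof -
  have "(\<integral>\<^sup>+ m. (\<Prod>j<n. ennreal (H j (m j))) \<partial>PiM {..<n} (\<lambda>_. lborel))
      = (\<Prod>j<n. \<integral>\<^sup>+ t. ennreal (H j t) \<partial>lborel)"
    using H_int by (intro product_sigma_finite.product_nn_integral_prod)
      (auto simp: product_sigma_finite_def sigma_finite_lborel)
  also have "\<dots> = (\<Prod>j<n. ennreal (\<integral>t. H j t \<partial>lborel))"
    using H_int H_nonneg by (intro prod.cong refl nn_integral_eq_integral) auto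
  also have "\<dots> = ennreal (\<Prod>j<n. \<integral>t. H j t \<partial>lborel)"
    using H_nonneg by (intro prod_ennreal integral_nonneg_AE AE_I2) auto
  finally show ?thesis .
qed

lemma statesD: "\<theta> \<in> states n \<Longrightarrow> j < n \<Longrightarrow> \<theta> j \<in> {0, 1}"
  by (auto simp: states_def PiE_iff)

lemma finite_states: "finite (states n)"
  by (simp add: states_def finite_PiE)

lemma sum_states_by_state:
  assumes "i < n"
  shows "(\<Sum>k\<in>{0, 1}. \<Sum>\<theta>\<in>{\<theta>\<in>states n. \<theta> i = k}. f \<theta>) = (\<Sum>\<theta>\<in>states n. f \<theta>)"
proof -
  have img: "(\<lambda>\<theta>. \<theta> i) ` states n \<subseteq> {0, 1}"
    unfolding image_subset_iff using statesD[OF _ assms] by blast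
  show ?thesis
    using sum.group[OF finite_states _ img] by simp
qed

lemma chain_prob_nonneg:
  assumes "n \<ge> 1" and "\<theta> \<in> states n"
    and "\<forall>k\<in>{0, 1}. \<psi> k \<ge> 0" and "\<forall>j\<in>{0, 1}. \<forall>k\<in>{0, 1}. a j k \<ge> 0"
  shows "chain_prob \<psi> a n \<theta> \<ge> 0"
proof -
  have "\<psi> (\<theta> 0) \<ge> 0"
    using assms(1,3) statesD[OF assms(2), of 0] by auto
  moreover have "a (\<theta> (j - 1)) (\<theta> j) \<ge> 0" if "j \<in> {1..<n}" for j
  proof -
    have "j - 1 < n" "j < n"
      using that by auto
    then have "\<theta> (j - 1) \<in> {0, 1}" "\<theta> j \<in> {0, 1}"
      using statesD[OF assms(2)] by blast+
    then show ?thesis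
      using assms(4) by blast
  qed
  ultimately show ?thesis
    unfolding chain_prob_def by (intro mult_nonneg_nonneg prod_nonneg) auto
qed

text \<open>\<open>post_risk \<psi> a g \<sigma> n i x d\<close> is the posterior expected loss E((\<mu>_i - d)^2 | X = x) times
  the marginal density of X at x; \<open>weight_except\<close> is the weight W\<theta>(x) of the proof sketch above.\<close>

definition weight_except :: "(nat \<Rightarrow> real) \<Rightarrow> (nat \<Rightarrow> nat \<Rightarrow> real) \<Rightarrow> (nat \<Rightarrow> real \<Rightarrow> real) \<Rightarrow> real
    \<Rightarrow> nat \<Rightarrow> nat \<Rightarrow> (nat \<Rightarrow> real) \<Rightarrow> (nat \<Rightarrow> nat) \<Rightarrow> real" where
  "weight_except \<psi> a g \<sigma> n i x \<theta> = chain_prob \<psi> a n \<theta> * (\<Prod>j\<in>{..<n} - {i}. mixf g \<sigma> (\<theta> j) (x j))"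

definition post_risk :: "(nat \<Rightarrow> real) \<Rightarrow> (nat \<Rightarrow> nat \<Rightarrow> real) \<Rightarrow> (nat \<Rightarrow> real \<Rightarrow> real) \<Rightarrow> real
    \<Rightarrow> nat \<Rightarrow> nat \<Rightarrow> (nat \<Rightarrow> real) \<Rightarrow> real \<Rightarrow> real" where
  "post_risk \<psi> a g \<sigma> n i x d =
     (\<Sum>\<theta>\<in>states n. weight_except \<psi> a g \<sigma> n i x \<theta> * sq_risk (g (\<theta> i)) \<sigma> (x i) d)"

lemma chain_prob_mult_mixf:
  assumes "i < n"
  shows "chain_prob \<psi> a n \<theta> * (\<Prod>j<n. mixf g \<sigma> (\<theta> j) (x j))
      = weight_except \<psi> a g \<sigma> n i x \<theta> * mixf g \<sigma> (\<theta> i) (x i)"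
  using assms by (simp add: weight_except_def prod.remove[of "{..<n}" i] mult_ac)

locale hmm_model =
  fixes n :: nat and \<sigma> :: real and \<psi> :: "nat \<Rightarrow> real"
    and a :: "nat \<Rightarrow> nat \<Rightarrow> real" and g :: "nat \<Rightarrow> real \<Rightarrow> real"
  assumes emission: "\<And>k. k \<in> {0, 1} \<Longrightarrow> gauss_mixture (g k) \<sigma>"
    and prior_nonneg: "\<And>\<theta>. \<theta> \<in> states n \<Longrightarrow> chain_prob \<psi> a n \<theta> \<ge> 0"
begin

lemma emission_state: "\<theta> \<in> states n \<Longrightarrow> j < n \<Longrightarrow> gauss_mixture (g (\<theta> j)) \<sigma>"
  using emission statesD by blast

lemma weight_except_nonneg:
  assumes "\<theta> \<in> states n"
  shows "weight_except \<psi> a g \<sigma> n i x \<theta> \<ge> 0"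
proof -
  have "gauss_moment (g (\<theta> j)) \<sigma> 0 y \<ge> 0" if "j < n" for j y
    using gauss_mixture.gauss_moment_0_pos[OF emission_state[OF assms that]] by (rule less_imp_le)
  then show ?thesis
    unfolding weight_except_def mixf_eq_gauss_moment
    using prior_nonneg[OF assms] by (intro mult_nonneg_nonneg prod_nonneg) auto
qed

lemma measurable_weight_except:
  "\<theta> \<in> states n \<Longrightarrow> (\<lambda>x. weight_except \<psi> a g \<sigma> n i x \<theta>) \<in> borel_measurable (PiM {..<n} (\<lambda>_. lborel))"
  unfolding weight_except_def mixf_eq_gauss_moment
  by (intro borel_measurable_times borel_measurable_const borel_measurable_prod
      gauss_mixture.measurable_gauss_moment_component emission_state) auto

lemma bayes_est_eq_cond_mean:
  "bayes_est \<psi> a g \<sigma> n x i = (\<Sum>k\<in>{0, 1}. cond_mean g \<sigma> k (x i) * post \<psi> a g \<sigma> n i k x)"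
  unfolding bayes_est_def cond_mean_eq_gauss_moment mixf_eq_gauss_moment
  by (intro sum.cong refl) (simp only: gauss_mixture.tweedie_formula[OF emission])

lemma bayes_est_eq_ratio:
  assumes "i < n"
  shows "bayes_est \<psi> a g \<sigma> n x i =
    (\<Sum>\<theta>\<in>states n. weight_except \<psi> a g \<sigma> n i x \<theta> * gauss_moment (g (\<theta> i)) \<sigma> 1 (x i))
    / (\<Sum>\<theta>\<in>states n. weight_except \<psi> a g \<sigma> n i x \<theta> * mixf g \<sigma> (\<theta> i) (x i))"
proof -
  let ?W = "weight_except \<psi> a g \<sigma> n i x"
  let ?M = "\<lambda>p \<theta>. gauss_moment (g (\<theta> i)) \<sigma> p (x i)"
  define A where "A = (\<Sum>\<theta>\<in>states n. ?W \<theta> * mixf g \<sigma> (\<theta> i) (x i))"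
  have post: "post \<psi> a g \<sigma> n i k x = (\<Sum>\<theta>\<in>{\<theta>\<in>states n. \<theta> i = k}. ?W \<theta> * ?M 0 \<theta>) / A" for k
    unfolding post_def A_def chain_prob_mult_mixf[OF assms] by (simp add: mixf_eq_gauss_moment)
  have "cond_mean g \<sigma> k (x i) * post \<psi> a g \<sigma> n i k x
      = (\<Sum>\<theta>\<in>{\<theta>\<in>states n. \<theta> i = k}. ?W \<theta> * ?M 1 \<theta> / A)" if "k \<in> {0, 1}" for k
    using gauss_mixture.gauss_moment_0_pos[OF emission[OF that], of "x i"]
    by (auto simp: post cond_mean_eq_gauss_moment sum_distrib_left sum_divide_distrib intro!: sum.cong)
  then have "bayes_est \<psi> a g \<sigma> n x i = (\<Sum>k\<in>{0, 1}. \<Sum>\<theta>\<in>{\<theta>\<in>states n. \<theta> i = k}. ?W \<theta> * ?M 1 \<theta> / A)"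
    unfolding bayes_est_eq_cond_mean by (rule sum.cong[OF refl])
  also have "\<dots> = (\<Sum>\<theta>\<in>states n. ?W \<theta> * ?M 1 \<theta>) / A"
    unfolding sum_states_by_state[OF assms] by (simp add: sum_divide_distrib)
  finally show ?thesis
    unfolding A_def .
qed

lemma measurable_bayes_est:
  assumes "i < n"
  shows "(\<lambda>x. bayes_est \<psi> a g \<sigma> n x i) \<in> borel_measurable (PiM {..<n} (\<lambda>_. lborel))"
  unfolding bayes_est_eq_ratio[OF assms] mixf_eq_gauss_moment
  using assms
  by (intro borel_measurable_divide borel_measurable_sum borel_measurable_times
      measurable_weight_except gauss_mixture.measurable_gauss_moment_component emission_state) auto

lemma post_risk_eq:
  assumes "i < n"
  shows "post_risk \<psi> a g \<sigma> n i x d = (\<Sum>\<theta>\<in>states n. weight_except \<psi> a g \<sigma> n i x \<theta> *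
    (gauss_moment (g (\<theta> i)) \<sigma> 2 (x i) - 2 * d * gauss_moment (g (\<theta> i)) \<sigma> 1 (x i)
      + d\<^sup>2 * gauss_moment (g (\<theta> i)) \<sigma> 0 (x i)))"
  unfolding post_risk_def using gauss_mixture.sq_risk_eq[OF emission_state] assms
  by (intro sum.cong) auto

lemma post_risk_bayes_est_le:
  assumes "i < n"
  shows "post_risk \<psi> a g \<sigma> n i x (bayes_est \<psi> a g \<sigma> n x i) \<le> post_risk \<psi> a g \<sigma> n i x d"
  unfolding post_risk_eq[OF assms] bayes_est_eq_ratio[OF assms] mixf_eq_gauss_moment
  using assms by (intro weighted_quadratic_minimum finite_states weight_except_nonneg
      gauss_mixture.gauss_moment_0_pos emission_state)

lemma measurable_weighted_sq_risk:
  assumes "\<theta> \<in> states n" and "i < n" and "d \<in> borel_measurable (PiM {..<n} (\<lambda>_. lborel))"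
  shows "(\<lambda>x. weight_except \<psi> a g \<sigma> n i x \<theta> * sq_risk (g (\<theta> i)) \<sigma> (x i) (d x))
      \<in> borel_measurable (PiM {..<n} (\<lambda>_. lborel))"
  unfolding gauss_mixture.sq_risk_eq[OF emission_state[OF assms(1,2)]] using assms
  by (intro borel_measurable_times borel_measurable_add borel_measurable_diff borel_measurable_power
      borel_measurable_const measurable_weight_except
      gauss_mixture.measurable_gauss_moment_component[OF emission_state[OF assms(1,2)]]) auto

lemma nn_integral_sq_loss_eq:
  assumes \<theta>: "\<theta> \<in> states n" and i: "i < n"
  shows "(\<integral>\<^sup>+ m. ennreal (chain_prob \<psi> a n \<theta> * (\<Prod>j<n. g (\<theta> j) (m j) * phi \<sigma> (x j - m j)))
          * ennreal ((m i - d)\<^sup>2) \<partial>PiM {..<n} (\<lambda>_. lborel))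
       = ennreal (weight_except \<psi> a g \<sigma> n i x \<theta> * sq_risk (g (\<theta> i)) \<sigma> (x i) d)"
proof -
  \<comment> \<open>the integrand is a product over the coordinates, and the loss only enters factor \<open>i\<close>\<close>
  define H where "H = (\<lambda>j t. (if j = i then (t - d)\<^sup>2 else 1) * phi \<sigma> (x j - t) * g (\<theta> j) t)"
  have H_nonneg: "H j t \<ge> 0" if "j < n" for j t
    using gauss_mixture.G_nonneg[OF emission_state[OF \<theta> that]] phi_nonneg by (simp add: H_def)
  have H_integral: "has_bochner_integral lborel (H j)
      (if j = i then sq_risk (g (\<theta> i)) \<sigma> (x i) d else mixf g \<sigma> (\<theta> j) (x j))" if "j < n" for j
  proof (cases "j = i")
    case True
    then show ?thesis
      using integrable.intros[OF gauss_mixture.has_bochner_integral_sq_loss[OF emission_state[OF \<theta> i]]]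
      by (simp add: H_def sq_risk_def has_bochner_integral_integrable)
  next
    case False
    then show ?thesis
      using gauss_mixture.has_bochner_integral_gauss_moment[OF emission_state[OF \<theta> that], of 0]
      by (simp add: H_def mixf_eq_gauss_moment)
  qed
  have prod_H: "(\<Prod>j<n. H j (m j)) = (\<Prod>j<n. g (\<theta> j) (m j) * phi \<sigma> (x j - m j)) * (m i - d)\<^sup>2"
    for m
    using i by (simp add: H_def prod.distrib mult_ac)
  have "ennreal (chain_prob \<psi> a n \<theta> * (\<Prod>j<n. g (\<theta> j) (m j) * phi \<sigma> (x j - m j)))
      * ennreal ((m i - d)\<^sup>2) = ennreal (chain_prob \<psi> a n \<theta>) * (\<Prod>j<n. ennreal (H j (m j)))" for m
  proof -
    have "(\<Prod>j<n. ennreal (H j (m j))) = ennreal (\<Prod>j<n. H j (m j))"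
      using H_nonneg by (intro prod_ennreal) simp
    then show ?thesis
      using prior_nonneg[OF \<theta>] by (simp add: prod_H ennreal_mult' ennreal_mult'' mult.assoc)
  qed
  moreover have "(\<lambda>m. \<Prod>j<n. ennreal (H j (m j))) \<in> borel_measurable (PiM {..<n} (\<lambda>_. lborel))"
  proof (rule borel_measurable_prod_ennreal)
    fix j assume j: "j \<in> {..<n}"
    then have "(\<lambda>t. ennreal (H j t)) \<in> borel_measurable lborel"
      using H_integral by (intro measurable_compose[OF _ measurable_ennreal] borel_measurable_integrable
          integrable.intros) auto
    then show "(\<lambda>m. ennreal (H j (m j))) \<in> borel_measurable (PiM {..<n} (\<lambda>_. lborel))"
      by (rule measurable_compose[OF measurable_component_singleton[OF j]])
  qed
  ultimately have "(\<integral>\<^sup>+ m. ennreal (chain_prob \<psi> a n \<theta> * (\<Prod>j<n. g (\<theta> j) (m j) * phi \<sigma> (x j - m j)))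
          * ennreal ((m i - d)\<^sup>2) \<partial>PiM {..<n} (\<lambda>_. lborel))
      = ennreal (chain_prob \<psi> a n \<theta>) * (\<integral>\<^sup>+ m. (\<Prod>j<n. ennreal (H j (m j))) \<partial>PiM {..<n} (\<lambda>_. lborel))"
    by (simp add: nn_integral_cmult)
  also have "\<dots> = ennreal (chain_prob \<psi> a n \<theta>) * ennreal (\<Prod>j<n. \<integral>t. H j t \<partial>lborel)"
    using H_integral H_nonneg by (subst nn_integral_prod_lborel) (auto intro: integrable.intros)
  also have "(\<Prod>j<n. \<integral>t. H j t \<partial>lborel)
      = sq_risk (g (\<theta> i)) \<sigma> (x i) d * (\<Prod>j\<in>{..<n} - {i}. mixf g \<sigma> (\<theta> j) (x j))"
  proof -
    have "(\<Prod>j\<in>{..<n} - {i}. \<integral>t. H j t \<partial>lborel) = (\<Prod>j\<in>{..<n} - {i}. mixf g \<sigma> (\<theta> j) (x j))"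
      using has_bochner_integral_integral_eq[OF H_integral] by (intro prod.cong) auto
    then show ?thesis
      using i has_bochner_integral_integral_eq[OF H_integral[OF i]]
      by (simp add: prod.remove[of "{..<n}" i])
  qed
  finally show ?thesis
    unfolding weight_except_def using prior_nonneg[OF \<theta>] by (simp add: ennreal_mult'[symmetric] mult_ac)
qed

lemma nn_integral_coordinate_risk:
  assumes i: "i < n" and d: "d \<in> borel_measurable (PiM {..<n} (\<lambda>_. lborel))"
  shows "(\<Sum>\<theta>\<in>states n. \<integral>\<^sup>+ x. \<integral>\<^sup>+ m.
        ennreal (chain_prob \<psi> a n \<theta> * (\<Prod>j<n. g (\<theta> j) (m j) * phi \<sigma> (x j - m j)))
        * ennreal ((m i - d x)\<^sup>2) \<partial>PiM {..<n} (\<lambda>_. lborel) \<partial>PiM {..<n} (\<lambda>_. lborel))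
    = (\<integral>\<^sup>+ x. ennreal (post_risk \<psi> a g \<sigma> n i x (d x)) \<partial>PiM {..<n} (\<lambda>_. lborel))"
proof -
  have "(\<Sum>\<theta>\<in>states n. \<integral>\<^sup>+ x. \<integral>\<^sup>+ m.
        ennreal (chain_prob \<psi> a n \<theta> * (\<Prod>j<n. g (\<theta> j) (m j) * phi \<sigma> (x j - m j)))
        * ennreal ((m i - d x)\<^sup>2) \<partial>PiM {..<n} (\<lambda>_. lborel) \<partial>PiM {..<n} (\<lambda>_. lborel))
    = (\<Sum>\<theta>\<in>states n. \<integral>\<^sup>+ x. ennreal (weight_except \<psi> a g \<sigma> n i x \<theta> * sq_risk (g (\<theta> i)) \<sigma> (x i) (d x))
        \<partial>PiM {..<n} (\<lambda>_. lborel))"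
    using i by (intro sum.cong refl nn_integral_cong nn_integral_sq_loss_eq)
  also have "\<dots> = (\<integral>\<^sup>+ x. (\<Sum>\<theta>\<in>states n.
        ennreal (weight_except \<psi> a g \<sigma> n i x \<theta> * sq_risk (g (\<theta> i)) \<sigma> (x i) (d x))) \<partial>PiM {..<n} (\<lambda>_. lborel))"
    using i d by (intro nn_integral_sum[symmetric] measurable_compose[OF measurable_weighted_sq_risk measurable_ennreal])
  also have "\<dots> = (\<integral>\<^sup>+ x. ennreal (post_risk \<psi> a g \<sigma> n i x (d x)) \<partial>PiM {..<n} (\<lambda>_. lborel))"
    unfolding post_risk_def using i weight_except_nonneg gauss_mixture.sq_risk_nonneg[OF emission_state]
    by (intro nn_integral_cong sum_ennreal) simp
  finally show ?thesis .
qed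

lemma mse_bayes_est_le:
  assumes "\<And>i. i < n \<Longrightarrow> (\<lambda>x. \<delta> x i) \<in> borel_measurable (PiM {..<n} (\<lambda>_. lborel))"
  shows "mse \<psi> a g \<sigma> n (bayes_est \<psi> a g \<sigma> n) \<le> mse \<psi> a g \<sigma> n \<delta>"
  unfolding mse_def
proof (rule mult_left_mono, rule sum_mono)
  fix i assume "i \<in> {..<n}"
  then have i: "i < n"
    by simp
  have "(\<integral>\<^sup>+ x. ennreal (post_risk \<psi> a g \<sigma> n i x (bayes_est \<psi> a g \<sigma> n x i)) \<partial>PiM {..<n} (\<lambda>_. lborel))
      \<le> (\<integral>\<^sup>+ x. ennreal (post_risk \<psi> a g \<sigma> n i x (\<delta> x i)) \<partial>PiM {..<n} (\<lambda>_. lborel))"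
    using i by (intro nn_integral_mono ennreal_leI post_risk_bayes_est_le)
  then show "(\<Sum>\<theta>\<in>states n. \<integral>\<^sup>+ x. \<integral>\<^sup>+ m.
        ennreal (chain_prob \<psi> a n \<theta> * (\<Prod>j<n. g (\<theta> j) (m j) * phi \<sigma> (x j - m j)))
        * ennreal ((m i - bayes_est \<psi> a g \<sigma> n x i)\<^sup>2) \<partial>PiM {..<n} (\<lambda>_. lborel) \<partial>PiM {..<n} (\<lambda>_. lborel))
    \<le> (\<Sum>\<theta>\<in>states n. \<integral>\<^sup>+ x. \<integral>\<^sup>+ m.
        ennreal (chain_prob \<psi> a n \<theta> * (\<Prod>j<n. g (\<theta> j) (m j) * phi \<sigma> (x j - m j)))
        * ennreal ((m i - \<delta> x i)\<^sup>2) \<partial>PiM {..<n} (\<lambda>_. lborel) \<partial>PiM {..<n} (\<lambda>_. lborel))"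
    using nn_integral_coordinate_risk[OF i measurable_bayes_est[OF i]]
      nn_integral_coordinate_risk[OF i assms[OF i]]
    by simp
qed simp

end

theorem lemma1:
  fixes n :: nat and \<sigma> :: real and \<psi> :: "nat \<Rightarrow> real"
    and a :: "nat \<Rightarrow> nat \<Rightarrow> real" and g :: "nat \<Rightarrow> real \<Rightarrow> real"
  assumes "n \<ge> 1"
    and "\<sigma> > 0"
    and "\<psi> 0 \<ge> 0" and "\<psi> 1 \<ge> 0" and "\<psi> 0 + \<psi> 1 = 1"
    and "\<forall>j\<in>{0,1}. \<forall>k\<in>{0,1}. 0 < a j k \<and> a j k < 1"
    and "\<forall>j\<in>{0,1}. a j 0 + a j 1 = 1"
    and "\<forall>k\<in>{0,1}. g k \<in> borel_measurable lborel \<and> (\<forall>m. g k m \<ge> 0)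
                    \<and> (\<integral>\<^sup>+ m. ennreal (g k m) \<partial>lborel) = 1"
  shows "(\<forall>\<delta>. (\<forall>i<n. (\<lambda>x. \<delta> x i) \<in> borel_measurable (PiM {..<n} (\<lambda>_. lborel)))
              \<longrightarrow> mse \<psi> a g \<sigma> n (bayes_est \<psi> a g \<sigma> n) \<le> mse \<psi> a g \<sigma> n \<delta>)
       \<and> (\<forall>x i. i < n \<longrightarrow>
            bayes_est \<psi> a g \<sigma> n x i = (\<Sum>k\<in>{0,1}. cond_mean g \<sigma> k (x i) * post \<psi> a g \<sigma> n i k x))"
proof -
  interpret hmm_model n \<sigma> \<psi> a g
  proof (rule hmm_model.intro)
    fix k :: nat
    assume "k \<in> {0, 1}"
    then have "g k \<in> borel_measurable lborel \<and> (\<forall>m. g k m \<ge> 0) \<and> (\<integral>\<^sup>+ m. ennreal (g k m) \<partial>lborel) = 1"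
      using assms(8) by blast
    then show "gauss_mixture (g k) \<sigma>"
      using assms(2) by (simp add: gauss_mixture_def)
  next
    show "chain_prob \<psi> a n \<theta> \<ge> 0" if "\<theta> \<in> states n" for \<theta>
      using assms(1,3,4,6) that by (intro chain_prob_nonneg) (auto simp: less_imp_le)
  qed
  show ?thesis
    using mse_bayes_est_le bayes_est_eq_cond_mean by blast
qed

end
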